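(* Consider any iteration $(\ell,i)$ (Taylor or recursive) in the course of the MOFFTR algorithm described in the context. Then $\|s_{\ell,i}\|\le\alpha\,\|D(w_{\ell,i})\,|g_{\ell,i}|\,\|$.
   Context: Notation: $\|\cdot\|$ is the Euclidean norm (spectral norm for matrices); $|x|$ is the componentwise absolute value; for a positive vector $w$, $D(w)=\mathrm{diag}(1/w_1,\dots,1/w_m)$. Setting: $r\ge1$ levels; functions $f_\ell:\mathbb{R}^{n_\ell}\to\mathbb{R}$, $n_r=n$, $f_r=f$; for $\ell\ge2$ full-rank linear $R_\ell:\mathbb{R}^{n_\ell}\to\mathbb{R}^{n_{\ell-1}}$, $P_\ell:\mathbb{R}^{n_{\ell-1}}\to\mathbb{R}^{n_\ell}$ with $\omega P_\ell=R_\ell^T$, $\omega>0$. Algorithm MOFFTR$(\ell,h_\ell,x_{\ell,0},\epsilon_\ell,i^{\max}_\ell,\delta_\ell,w_{\ell,0})$ with constants $\kappa_R\in(0,1)$, $\alpha\ge1$, $\tau\in(0,1]$, $\kappa_B\ge1$, $\varsigma_j\in(0,1]$; $i=0$. Step 1: if $\ell<r$ and $\|P_{\ell+1}(x_{\ell,i}-x_{\ell,0})\|>\delta_\ell$, return $x_{\ell,i-1}$. Else $g_{\ell,i}=\nabla h_\ell(x_{\ell,i})$; if $\|g_{\ell,i}\|\le\epsilon_\ell$ or $i=i^{\max}_\ell$, return $x_{\ell,i}$. Step 2: $\widehat\Delta_{\ell,i}=D(w_{\ell,i})|g_{\ell,i}|$; $\Delta_{\ell,i}=\widehat\Delta_{\ell,i}$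 if $\ell=r$, else $\Delta_{\ell,i}=\min[2\delta_\ell/(\|P_{\ell+1}\|\|\widehat\Delta_{\ell,i}\|),1]\widehat\Delta_{\ell,i}$. For $i>0$ choose $w_{\ell,i}$ with $w_{\ell,i,j}\ge\varsigma_j$. If a Taylor step is chosen, go to Step 4. Step 3: choose $w_{\ell-1,0}$ with $w_{\ell-1,0,j}\ge\varsigma_j$, a variant-dependent "lower-level weights large enough" condition, and $\|D(w_{\ell-1,0})|R_\ell g_{\ell,i}|\|\le\alpha\|\Delta_{\ell,i}\|/\|P_\ell\|$. If $\ell=1$ or $\sum_j[R_\ell g_{\ell,i}]_j^2/w_{\ell-1,0,j}<\kappa_R\sum_j g_{\ell,i,j}^2/w_{\ell,i,j}$, go to Step 4. Otherwise (recursive iteration) $s_{\ell,i}=P_\ell[\mathrm{MOFFTR}(\ell-1,h_{\ell-1},R_\ell x_{\ell,i},\epsilon_{\ell-1},i^{\max}_{\ell-1},\alpha\|\Delta_{\ell,i}\|,w_{\ell-1,0})-R_\ell x_{\ell,i}]$ with $h_{\ell-1}(x_{\ell-1,0}+s)=f_{\ell-1}(x_{\ell-1,0}+s)+(R_\ell g_{\ell,i}-\nabla f_{\ell-1}(x_{\ell-1,0}))^Ts$, $x_{\ell-1,0}=R_\ell x_{\ell,i}$; go to Step 5. Step 4 (Taylor iteration): symmetric $B$ with $\|B\|\le\kappa_B$; step $s$ with $|s_j|\le\Delta_{\ell,i,j}$ and $g^Ts+\frac12s^TBs\le\tau(g^Ts^Q+\frac12(s^Q)^TBs^Q)$, $s^L_j=-\mathrm{sign}(g_j)\Delta_{\ell,i,j}$,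 $s^Q=\gamma s^L$, $\gamma=\min[1,|g^Ts^L|/((s^L)^TBs^L)]$ if $(s^L)^TBs^L>0$, else $\gamma=1$. Step 5: $x_{\ell,i+1}=x_{\ell,i}+s_{\ell,i}$, $i\leftarrow i+1$, go to Step 1. Top-level call MOFFTR$(r,f,x_{r,0},\epsilon_r,i^{\max}_r,+\infty,w_{r,0})$, $h_r=f$. *)

theory Defs
  imports Complex_Main "Jordan_Normal_Form.DL_Rank" "HOL-Library.Extended_Real"
begin

definition vnorm :: "real vec \<Rightarrow> real" where
  "vnorm v = sqrt (\<Sum>j<dim_vec v. (v $ j)^2)"

definition opnorm :: "real mat \<Rightarrow> real" where
  "opnorm A = Sup {vnorm (A *\<^sub>v x) | x. x \<in> carrier_vec (dim_col A) \<and> vnorm x \<le> 1}"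

definition full_rank :: "real mat \<Rightarrow> bool" where
  "full_rank A \<longleftrightarrow> vec_space.rank (dim_row A) A = min (dim_row A) (dim_col A)"

text \<open>D(w)|g| = diag(1/w_1,...,1/w_m) |g|.\<close>
definition Dabs :: "real vec \<Rightarrow> real vec \<Rightarrow> real vec" where
  "Dabs w g = vec (dim_vec g) (\<lambda>j. \<bar>g $ j\<bar> / w $ j)"

definition grad :: "nat \<Rightarrow> (real vec \<Rightarrow> real) \<Rightarrow> real vec \<Rightarrow> real vec" where
  "grad m h x = vec m (\<lambda>j. SOME D. ((\<lambda>t. h (x + t \<cdot>\<^sub>v unit_vec m j)) has_real_derivative D) (at 0))"

definition out_test :: "nat \<Rightarrow> (nat \<Rightarrow> real mat) \<Rightarrow> nat \<Rightarrow> real vec \<Rightarrow> ereal \<Rightarrow> real vec \<Rightarrow> bool" where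
  "out_test r P l x0 dl x \<longleftrightarrow> l < r \<and> ereal (vnorm (P (Suc l) *\<^sub>v (x - x0))) > dl"

definition Delta_of :: "nat \<Rightarrow> (nat \<Rightarrow> real mat) \<Rightarrow> nat \<Rightarrow> ereal \<Rightarrow> real vec \<Rightarrow> real vec \<Rightarrow> real vec" where
  "Delta_of r P l dl w g =
     (if l = r then Dabs w g
      else min (2 * real_of_ereal dl / (opnorm (P (Suc l)) * vnorm (Dabs w g))) 1 \<cdot>\<^sub>v Dabs w g)"

definition taylor_step :: "real \<Rightarrow> real \<Rightarrow> nat \<Rightarrow> real vec \<Rightarrow> real vec \<Rightarrow> real vec \<Rightarrow> bool" where
  "taylor_step tau kB m g Dl s \<longleftrightarrow>
     (\<exists>B. B \<in> carrier_mat m m \<and> transpose_mat B = B \<and> opnorm B \<le> kB \<and>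
        s \<in> carrier_vec m \<and> (\<forall>j<m. \<bar>s $ j\<bar> \<le> Dl $ j) \<and>
        (let sL = vec m (\<lambda>j. - sgn (g $ j) * Dl $ j);
             q = sL \<bullet> (B *\<^sub>v sL);
             gam = (if q > 0 then min 1 (\<bar>g \<bullet> sL\<bar> / q) else 1);
             sQ = gam \<cdot>\<^sub>v sL
         in g \<bullet> s + 1/2 * (s \<bullet> (B *\<^sub>v s)) \<le> tau * (g \<bullet> sQ + 1/2 * (sQ \<bullet> (B *\<^sub>v sQ)))))"

text \<open>Step 3: admissible lower-level initial weights (LW is the variant-dependent
  "lower-level weights large enough" condition, left abstract).\<close>
definition lower_weights_ok ::
  "(nat \<Rightarrow> nat) \<Rightarrow> (nat \<Rightarrow> real mat) \<Rightarrow> (nat \<Rightarrow> real mat) \<Rightarrow> real \<Rightarrow> (nat \<Rightarrow> real)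
   \<Rightarrow> (nat \<Rightarrow> real vec \<Rightarrow> real vec \<Rightarrow> real vec \<Rightarrow> real vec \<Rightarrow> bool)
   \<Rightarrow> nat \<Rightarrow> real vec \<Rightarrow> real vec \<Rightarrow> real vec \<Rightarrow> real vec \<Rightarrow> real vec \<Rightarrow> bool" where
  "lower_weights_ok n R P alpha vs LW l x g w Dl w1 \<longleftrightarrow>
     w1 \<in> carrier_vec (n (l - 1)) \<and> (\<forall>j<n (l - 1). w1 $ j \<ge> vs j) \<and> LW l x g w w1 \<and>
     vnorm (Dabs w1 (R l *\<^sub>v g)) \<le> alpha * vnorm Dl / opnorm (P l)"

text \<open>Step 3 test for going recursive (negation of the Taylor-forcing test).\<close>
definition recursion_test :: "(nat \<Rightarrow> nat) \<Rightarrow> (nat \<Rightarrow> real mat) \<Rightarrow> real \<Rightarrow> nat \<Rightarrow> real vec \<Rightarrow> real vec \<Rightarrow> real vec \<Rightarrow> bool" where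
  "recursion_test n R kR l g w w1 \<longleftrightarrow>
     1 < l \<and> \<not> ((\<Sum>j<n (l - 1). ((R l *\<^sub>v g) $ j)^2 / w1 $ j) < kR * (\<Sum>j<n l. (g $ j)^2 / w $ j))"

definition lower_obj :: "(nat \<Rightarrow> nat) \<Rightarrow> (nat \<Rightarrow> real vec \<Rightarrow> real) \<Rightarrow> (nat \<Rightarrow> real mat) \<Rightarrow> nat \<Rightarrow> real vec \<Rightarrow> real vec \<Rightarrow> real vec \<Rightarrow> real" where
  "lower_obj n f R l x g y =
     f (l - 1) y + (R l *\<^sub>v g - grad (n (l - 1)) (f (l - 1)) (R l *\<^sub>v x)) \<bullet> (y - R l *\<^sub>v x)"

text \<open>A call is identified by (l, h, x0, delta, w0); eps and imax are per-level.
  reach l h x0 dl w0 i xp x w : the call reaches Step 1 of iteration i with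
     x_{l,i} = x, x_{l,i-1} = xp (xp = x0 when i = 0) and weight w_{l,i} = w;
  iter l h x0 dl w0 i x w s : iteration i (Taylor or recursive) is performed at x, w
     and produces the step s_{l,i} = s;
  returns l h x0 dl w0 xr : the call terminates returning xr.\<close>
inductive reach and iter and returns
  for r :: nat and n :: "nat \<Rightarrow> nat" and f :: "nat \<Rightarrow> real vec \<Rightarrow> real"
  and R :: "nat \<Rightarrow> real mat" and P :: "nat \<Rightarrow> real mat"
  and kR :: real and alpha :: real and tau :: real and kB :: real and vs :: "nat \<Rightarrow> real"
  and LW :: "nat \<Rightarrow> real vec \<Rightarrow> real vec \<Rightarrow> real vec \<Rightarrow> real vec \<Rightarrow> bool"
  and eps :: "nat \<Rightarrow> real" and imax :: "nat \<Rightarrow> nat"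
where
  start: "reach r n f R P kR alpha tau kB vs LW eps imax l h x0 dl w0 0 x0 x0 w0"
| taylor: "\<lbrakk> reach r n f R P kR alpha tau kB vs LW eps imax l h x0 dl w0 i xp x w; \<not> out_test r P l x0 dl x;
             \<not> (vnorm (grad (n l) h x) \<le> eps l \<or> i = imax l);
             taylor_step tau kB (n l) (grad (n l) h x) (Delta_of r P l dl w (grad (n l) h x)) s \<rbrakk>
           \<Longrightarrow> iter r n f R P kR alpha tau kB vs LW eps imax l h x0 dl w0 i x w s"
| recursive: "\<lbrakk> reach r n f R P kR alpha tau kB vs LW eps imax l h x0 dl w0 i xp x w; \<not> out_test r P l x0 dl x;
             \<not> (vnorm (grad (n l) h x) \<le> eps l \<or> i = imax l);
             lower_weights_ok n R P alpha vs LW l x (grad (n l) h x) w (Delta_of r P l dl w (grad (n l) h x)) w1;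
             recursion_test n R kR l (grad (n l) h x) w w1;
             returns r n f R P kR alpha tau kB vs LW eps imax (l - 1) (lower_obj n f R l x (grad (n l) h x)) (R l *\<^sub>v x)
               (ereal (alpha * vnorm (Delta_of r P l dl w (grad (n l) h x)))) w1 xr;
             s = P l *\<^sub>v (xr - R l *\<^sub>v x) \<rbrakk>
           \<Longrightarrow> iter r n f R P kR alpha tau kB vs LW eps imax l h x0 dl w0 i x w s"
| next_it: "\<lbrakk> iter r n f R P kR alpha tau kB vs LW eps imax l h x0 dl w0 i x w s; w' \<in> carrier_vec (n l); \<forall>j<n l. w' $ j \<ge> vs j \<rbrakk>
           \<Longrightarrow> reach r n f R P kR alpha tau kB vs LW eps imax l h x0 dl w0 (Suc i) x (x + s) w'"
| ret_out: "\<lbrakk> reach r n f R P kR alpha tau kB vs LW eps imax l h x0 dl w0 i xp x w; out_test r P l x0 dl x \<rbrakk>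
           \<Longrightarrow> returns r n f R P kR alpha tau kB vs LW eps imax l h x0 dl w0 xp"
| ret_stop: "\<lbrakk> reach r n f R P kR alpha tau kB vs LW eps imax l h x0 dl w0 i xp x w; \<not> out_test r P l x0 dl x;
              vnorm (grad (n l) h x) \<le> eps l \<or> i = imax l \<rbrakk>
           \<Longrightarrow> returns r n f R P kR alpha tau kB vs LW eps imax l h x0 dl w0 x"

text \<open>Calls occurring in the course of the top-level call MOFFTR(r, f_r, xtop, eps_r, imax_r, +inf, wtop).\<close>
inductive called
  for r :: nat and n :: "nat \<Rightarrow> nat" and f :: "nat \<Rightarrow> real vec \<Rightarrow> real"
  and R :: "nat \<Rightarrow> real mat" and P :: "nat \<Rightarrow> real mat"
  and kR :: real and alpha :: real and tau :: real and kB :: real and vs :: "nat \<Rightarrow> real"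
  and LW :: "nat \<Rightarrow> real vec \<Rightarrow> real vec \<Rightarrow> real vec \<Rightarrow> real vec \<Rightarrow> bool"
  and eps :: "nat \<Rightarrow> real" and imax :: "nat \<Rightarrow> nat"
  and xtop :: "real vec" and wtop :: "real vec"
where
  top: "called r n f R P kR alpha tau kB vs LW eps imax xtop wtop r (f r) xtop PInfty wtop"
| sub: "\<lbrakk> called r n f R P kR alpha tau kB vs LW eps imax xtop wtop l h x0 dl w0;
          reach r n f R P kR alpha tau kB vs LW eps imax l h x0 dl w0 i xp x w;
          \<not> out_test r P l x0 dl x;
          \<not> (vnorm (grad (n l) h x) \<le> eps l \<or> i = imax l);
          lower_weights_ok n R P alpha vs LW l x (grad (n l) h x) w (Delta_of r P l dl w (grad (n l) h x)) w1;
          recursion_test n R kR l (grad (n l) h x) w w1 \<rbrakk>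
        \<Longrightarrow> called r n f R P kR alpha tau kB vs LW eps imax xtop wtop (l - 1) (lower_obj n f R l x (grad (n l) h x)) (R l *\<^sub>v x)
               (ereal (alpha * vnorm (Delta_of r P l dl w (grad (n l) h x)))) w1"

end

theory Submission
  imports Defs
begin

text \<open>A Taylor step lies in the box \<open>|s\<^sub>j| \<le> \<Delta>\<^sub>j\<close>, so \<open>\<parallel>s\<parallel> \<le> \<parallel>\<Delta>\<parallel> \<le> \<alpha> \<parallel>\<Delta>\<parallel>\<close>.
  A recursive step is \<open>P\<^sub>\<ell>\<close> applied to the displacement of the point returned by the
  lower-level call, which was called with radius \<open>\<alpha> \<parallel>\<Delta>\<parallel>\<close>; that point is either the
  starting point or an iterate that passed the exit test of Step 1, so \<open>\<parallel>s\<parallel> \<le> \<alpha> \<parallel>\<Delta>\<parallel>\<close>.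
  Finally \<open>\<Delta>\<close> is \<open>D(w)|g|\<close> scaled by a factor in \<open>[0, 1]\<close>.\<close>

lemma vnorm_nonneg: "0 \<le> vnorm v"
  by (simp add: vnorm_def sum_nonneg)

lemma vnorm_smult: "vnorm (c \<cdot>\<^sub>v v) = \<bar>c\<bar> * vnorm v"
proof -
  have "vnorm (c \<cdot>\<^sub>v v) = sqrt (c\<^sup>2 * (\<Sum>j<dim_vec v. (v $ j)\<^sup>2))"
    by (simp add: vnorm_def sum_distrib_left power_mult_distrib)
  then show ?thesis
    by (simp add: real_sqrt_mult vnorm_def)
qed

lemma vnorm_mono_abs:
  assumes "dim_vec u = dim_vec v" and "\<And>j. j < dim_vec v \<Longrightarrow> \<bar>u $ j\<bar> \<le> \<bar>v $ j\<bar>"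
  shows "vnorm u \<le> vnorm v"
proof -
  have "(\<Sum>j<dim_vec v. (u $ j)\<^sup>2) \<le> (\<Sum>j<dim_vec v. (v $ j)\<^sup>2)"
    using assms(2) by (intro sum_mono) (simp add: abs_le_square_iff)
  then show ?thesis
    using assms(1) by (simp add: vnorm_def)
qed

lemma abs_nth_le_vnorm:
  assumes "j < dim_vec v"
  shows "\<bar>v $ j\<bar> \<le> vnorm v"
proof -
  have "(v $ j)\<^sup>2 \<le> (\<Sum>k<dim_vec v. (v $ k)\<^sup>2)"
    using assms by (intro member_le_sum) auto
  then show ?thesis
    unfolding vnorm_def by (metis real_sqrt_abs real_sqrt_le_mono)
qed

lemma abs_mult_mat_vec_le_row_sum:
  assumes "x \<in> carrier_vec (dim_col A)" "vnorm x \<le> 1" "i < dim_row A"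
  shows "\<bar>(A *\<^sub>v x) $ i\<bar> \<le> (\<Sum>j<dim_col A. \<bar>A $$ (i, j)\<bar>)"
proof -
  have "(A *\<^sub>v x) $ i = (\<Sum>j<dim_col A. A $$ (i, j) * x $ j)"
    using assms by (simp add: mult_mat_vec_def scalar_prod_def row_def lessThan_atLeast0)
  also have "\<bar>\<dots>\<bar> \<le> (\<Sum>j<dim_col A. \<bar>A $$ (i, j) * x $ j\<bar>)"
    by (rule sum_abs)
  also have "\<dots> \<le> (\<Sum>j<dim_col A. \<bar>A $$ (i, j)\<bar>)"
  proof (rule sum_mono)
    fix j assume "j \<in> {..<dim_col A}"
    then have "\<bar>x $ j\<bar> \<le> 1"
      using abs_nth_le_vnorm[of j x] assms(1,2) by auto
    then show "\<bar>A $$ (i, j) * x $ j\<bar> \<le> \<bar>A $$ (i, j)\<bar>"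
      by (simp add: abs_mult mult_left_le)
  qed
  finally show ?thesis .
qed

lemma opnorm_nonneg: "0 \<le> opnorm A"
proof -
  define S where "S = {vnorm (A *\<^sub>v x) | x. x \<in> carrier_vec (dim_col A) \<and> vnorm x \<le> 1}"
  define b where "b = vec (dim_row A) (\<lambda>i. \<Sum>j<dim_col A. \<bar>A $$ (i, j)\<bar>)"
  have "bdd_above S"
  proof (rule bdd_aboveI)
    fix y assume "y \<in> S"
    then obtain x where x: "x \<in> carrier_vec (dim_col A)" "vnorm x \<le> 1" and y: "y = vnorm (A *\<^sub>v x)"
      unfolding S_def by auto
    have "\<bar>(A *\<^sub>v x) $ i\<bar> \<le> \<bar>b $ i\<bar>" if "i < dim_row A" for i
      using abs_mult_mat_vec_le_row_sum[OF x that] that by (simp add: b_def)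
    then have "vnorm (A *\<^sub>v x) \<le> vnorm b"
      by (intro vnorm_mono_abs) (simp_all add: b_def)
    then show "y \<le> vnorm b"
      using y by simp
  qed
  moreover have "0 \<in> S"
    unfolding S_def by (intro CollectI exI[of _ "0\<^sub>v (dim_col A)"]) (simp add: vnorm_def)
  ultimately have "0 \<le> Sup S"
    by (rule cSup_upper[rotated])
  then show ?thesis
    by (simp add: opnorm_def S_def)
qed

lemma Delta_of_norm_le:
  assumes "0 \<le> dl"
  shows "vnorm (Delta_of r P l dl w g) \<le> vnorm (Dabs w g)"
proof (cases "l = r")
  case False
  define c where "c = min (2 * real_of_ereal dl / (opnorm (P (Suc l)) * vnorm (Dabs w g))) 1"
  have "0 \<le> c"
    using assms opnorm_nonneg vnorm_nonneg by (simp add: c_def real_of_ereal_pos)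
  moreover have "c \<le> 1"
    by (simp add: c_def)
  ultimately show ?thesis
    using False vnorm_nonneg[of "Dabs w g"]
    by (simp add: Delta_of_def vnorm_smult flip: c_def) (simp add: mult_left_le_one_le)
qed (simp add: Delta_of_def)

lemma dim_grad [simp]: "dim_vec (grad m h x) = m"
  by (simp add: grad_def)

lemma dim_Delta_of: "dim_vec (Delta_of r P l dl w g) = dim_vec g"
  by (simp add: Delta_of_def Dabs_def)

lemma taylor_step_norm_le:
  assumes "taylor_step tau kB m g Dl s" and "dim_vec Dl = m"
  shows "vnorm s \<le> vnorm Dl"
  using assms by (auto simp: taylor_step_def intro!: vnorm_mono_abs)

locale mofftr =
  fixes r :: nat and n :: "nat \<Rightarrow> nat" and f :: "nat \<Rightarrow> real vec \<Rightarrow> real"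
    and R :: "nat \<Rightarrow> real mat" and P :: "nat \<Rightarrow> real mat"
    and kR alpha tau kB :: real and vs :: "nat \<Rightarrow> real"
    and LW :: "nat \<Rightarrow> real vec \<Rightarrow> real vec \<Rightarrow> real vec \<Rightarrow> real vec \<Rightarrow> bool"
    and eps :: "nat \<Rightarrow> real" and imax :: "nat \<Rightarrow> nat" and xtop wtop :: "real vec"
begin

abbreviation "reach' \<equiv> reach r n f R P kR alpha tau kB vs LW eps imax"
abbreviation "iter' \<equiv> iter r n f R P kR alpha tau kB vs LW eps imax"
abbreviation "returns' \<equiv> returns r n f R P kR alpha tau kB vs LW eps imax"
abbreviation "called' \<equiv> called r n f R P kR alpha tau kB vs LW eps imax xtop wtop"

lemma called_level_le: "called' l h x0 dl w0 \<Longrightarrow> l \<le> r"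
  by (induction rule: called.induct) auto

lemma called_radius_nonneg: "called' l h x0 dl w0 \<Longrightarrow> 0 \<le> alpha \<Longrightarrow> 0 \<le> dl"
  by (induction rule: called.induct) (auto intro!: mult_nonneg_nonneg vnorm_nonneg)

lemma reach_previous_not_out:
  assumes "reach' l h x0 dl w0 i xp x w"
  shows "xp = x0 \<or> \<not> out_test r P l x0 dl xp"
  using assms by (cases rule: reach.cases) (auto elim: iter.cases)

lemma returns_within_radius:
  assumes "returns' l h x0 dl w0 xr" and "l < r" and "0 \<le> dl"
  shows "ereal (vnorm (P (Suc l) *\<^sub>v (xr - x0))) \<le> dl"
  using assms(1)
proof (cases rule: returns.cases)
  case (ret_out i x w)
  show ?thesis
  proof (cases "xr = x0")
    case True
    have "vnorm (P (Suc l) *\<^sub>v (x0 - x0)) = 0"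
      by (simp add: vnorm_def scalar_prod_def)
    then show ?thesis
      using True assms(3) by (simp add: zero_ereal_def)
  next
    case False
    then show ?thesis
      using reach_previous_not_out[OF ret_out(1)] assms(2) by (simp add: out_test_def)
  qed
next
  case ret_stop
  then show ?thesis
    using assms(2) by (simp add: out_test_def)
qed

lemma iter_step_norm_le:
  assumes "1 \<le> alpha" and "l \<le> r" and "0 \<le> dl" and "iter' l h x0 dl w0 i x w s"
  shows "vnorm s \<le> alpha * vnorm (Delta_of r P l dl w (grad (n l) h x))"
  using assms(4)
proof (cases rule: iter.cases)
  case taylor
  have "vnorm s \<le> vnorm (Delta_of r P l dl w (grad (n l) h x))"
    by (rule taylor_step_norm_le[OF taylor(4)]) (simp add: dim_Delta_of)
  also have "\<dots> \<le> alpha * vnorm (Delta_of r P l dl w (grad (n l) h x))"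
    using mult_right_mono[OF assms(1) vnorm_nonneg] by simp
  finally show ?thesis .
next
  case (recursive xp w1 xr)
  then have "1 < l"
    by (simp add: recursion_test_def)
  then show ?thesis
    using returns_within_radius[OF recursive(6)] recursive(7) assms(1,2) vnorm_nonneg
    by simp
qed

end

theorem lemma3p2:
  fixes r :: nat and n :: "nat \<Rightarrow> nat" and f :: "nat \<Rightarrow> real vec \<Rightarrow> real"
    and R :: "nat \<Rightarrow> real mat" and P :: "nat \<Rightarrow> real mat" and \<omega> :: real
    and kR alpha tau kB :: real and vs :: "nat \<Rightarrow> real"
    and LW :: "nat \<Rightarrow> real vec \<Rightarrow> real vec \<Rightarrow> real vec \<Rightarrow> real vec \<Rightarrow> bool"
    and eps :: "nat \<Rightarrow> real" and imax :: "nat \<Rightarrow> nat"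
    and xtop wtop :: "real vec"
    and l :: nat and h :: "real vec \<Rightarrow> real" and x0 :: "real vec" and dl :: ereal and w0 :: "real vec"
    and i :: nat and x w s :: "real vec"
  assumes r: "r \<ge> 1"
    and RP: "\<And>k. 2 \<le> k \<Longrightarrow> k \<le> r \<Longrightarrow>
              R k \<in> carrier_mat (n (k - 1)) (n k) \<and> P k \<in> carrier_mat (n k) (n (k - 1)) \<and>
              full_rank (R k) \<and> \<omega> \<cdot>\<^sub>m P k = transpose_mat (R k)"
    and omega: "\<omega> > 0"
    and fdiff: "\<And>k y j. 1 \<le> k \<Longrightarrow> k \<le> r \<Longrightarrow> y \<in> carrier_vec (n k) \<Longrightarrow> j < n k \<Longrightarrow>
              (\<lambda>t. f k (y + t \<cdot>\<^sub>v unit_vec (n k) j)) differentiable (at 0)"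
    and kR: "0 < kR" "kR < 1" and alpha: "alpha \<ge> 1" and tau: "0 < tau" "tau \<le> 1"
    and kB: "kB \<ge> 1" and vs: "\<And>j. 0 < vs j \<and> vs j \<le> 1"
    and xtop: "xtop \<in> carrier_vec (n r)"
    and wtop: "wtop \<in> carrier_vec (n r)" "\<And>j. j < n r \<Longrightarrow> wtop $ j > 0"
    and call: "called r n f R P kR alpha tau kB vs LW eps imax xtop wtop l h x0 dl w0"
    and it: "iter r n f R P kR alpha tau kB vs LW eps imax l h x0 dl w0 i x w s"
  shows "vnorm s \<le> alpha * vnorm (Dabs w (grad (n l) h x))"
proof -
  have "0 \<le> dl"
    using mofftr.called_radius_nonneg[OF call] alpha by simp
  then have "vnorm s \<le> alpha * vnorm (Delta_of r P l dl w (grad (n l) h x))"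
    using mofftr.iter_step_norm_le[OF alpha mofftr.called_level_le[OF call] _ it] by simp
  also have "\<dots> \<le> alpha * vnorm (Dabs w (grad (n l) h x))"
    using Delta_of_norm_le[OF \<open>0 \<le> dl\<close>] alpha by simp
  finally show ?thesis .
qed

end
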